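(* Let $\alpha,\beta$ be words over $X$ such that $\alpha\beta$ has no repeated letters, $|\alpha|$ is even, and $|\beta|=2n$ with $n\ge1$. Then $$f[\alpha]^{\,n-1}\,f[\alpha\beta]=\sum s(\beta,x_1y_1\ldots x_ny_n)\,f[\alpha x_1y_1]\,f[\alpha x_2y_2]\cdots f[\alpha x_ny_n].$$ The sum is over all perfect matchings $\{x_1,y_1\},\ldots,\{x_n,y_n\}$ of the set of letters of $\beta$, each matching counted once. The summand does not depend on how the matching is listed.
   Context: Setting. Let $X$ be a set and $R$ a commutative ring. Let $f$ assign to each ordered pair $(x,y)\in X\times X$ an element $f[xy]\in R$, subject to $f[xy]=-f[yx]$ and $f[xx]=0$ for all $x,y\in X$. Words. A word is a finite sequence of elements (letters) of $X$. Concatenation is written by juxtaposition, $\epsilon$ is the empty word, and $|\alpha|$ is the length of $\alpha$. For words $\alpha,\beta$, the word $\alpha\setminus\beta$ is obtained from $\alpha$ by deleting every letter that occurs in $\beta$. Sign. For words $\alpha,\beta$, set $s(\alpha,\beta)=0$ if $\alpha$ or $\beta$ has a repeated letter, or if $\beta$ contains a letter not in $\alpha$. Otherwise $s(\alpha,\beta)\in\{\pm1\}$ is the sign of the permutation that rearranges $\alpha$ into the word $\beta(\alpha\setminus\beta)$. Pfaffian. Let $\alpha=x_1\ldots x_{2n}$ be a word with distinct letters. Then $$f[\alpha]=\sum s(\alpha,y_1\ldots y_{2n})\,f[y_1y_2]\cdots f[y_{2n-1}y_{2n}],$$ where the sum is over the $(2n-1)(2n-3)\cdots1$ partitions of $\{x_1,\ldots,x_{2n}\}$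 into pairs $\{y_1,y_2\},\ldots,\{y_{2n-1},y_{2n}\}$. Each term does not depend on the order in which the pairs or their elements are listed. Further conventions: $f[\epsilon]=1$; $f[\alpha]=0$ if $\alpha$ has a repeated letter; and $f[\alpha]=0$ if $|\alpha|$ is odd. *)

theory Defs
  imports "HOL-Combinatorics.Permutations" "HOL-Library.Disjoint_Sets"
begin

definition word_minus :: "'a list \<Rightarrow> 'a list \<Rightarrow> 'a list" where
  "word_minus \<alpha> \<beta> = filter (\<lambda>x. x \<notin> set \<beta>) \<alpha>"

definition rearr_perm :: "'a list \<Rightarrow> 'a list \<Rightarrow> nat \<Rightarrow> nat" where
  "rearr_perm \<alpha> \<gamma> i = (if i < length \<alpha> then (THE j. j < length \<alpha> \<and> \<alpha> ! j = \<gamma> ! i) else i)"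

definition sgnw :: "'a list \<Rightarrow> 'a list \<Rightarrow> int" where
  "sgnw \<alpha> \<beta> = (if \<not> distinct \<alpha> \<or> \<not> distinct \<beta> \<or> \<not> set \<beta> \<subseteq> set \<alpha> then 0
     else sign (rearr_perm \<alpha> (\<beta> @ word_minus \<alpha> \<beta>)))"

definition perfect_matching :: "'a set \<Rightarrow> 'a set set \<Rightarrow> bool" where
  "perfect_matching S M \<longleftrightarrow> partition_on S M \<and> (\<forall>e\<in>M. card e = 2)"

definition listing_of :: "'a set set \<Rightarrow> ('a \<times> 'a) list \<Rightarrow> bool" where
  "listing_of M ps \<longleftrightarrow> distinct ps \<and> length ps = card M \<and> set (map (\<lambda>(x,y). {x,y}) ps) = M"

definition flat_pairs :: "('a \<times> 'a) list \<Rightarrow> 'a list" where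
  "flat_pairs ps = concat (map (\<lambda>(x,y). [x,y]) ps)"

text \<open>Sum over perfect matchings of the letters of beta of
  s(beta, y1 y2 ... ) * g y1 y2 * ... * g y_{2n-1} y_{2n}, with an arbitrary listing of each
  matching (the paper notes the summand does not depend on the listing).\<close>
definition matching_sum :: "('a \<Rightarrow> 'a \<Rightarrow> 'r::comm_ring_1) \<Rightarrow> 'a list \<Rightarrow> 'r" where
  "matching_sum g \<beta> = (\<Sum>M | perfect_matching (set \<beta>) M.
      (let ps = (SOME ps. listing_of M ps) in
        of_int (sgnw \<beta> (flat_pairs ps)) * prod_list (map (\<lambda>(x,y). g x y) ps)))"

definition pf :: "('a \<Rightarrow> 'a \<Rightarrow> 'r::comm_ring_1) \<Rightarrow> 'a list \<Rightarrow> 'r" where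
  "pf f \<alpha> = (if \<alpha> = [] then 1 else if \<not> distinct \<alpha> then 0 else if odd (length \<alpha>) then 0
     else matching_sum f \<alpha>)"

end

theory Submission
  imports Defs
begin

text \<open>
  Expanding along the first letter, \<open>pf(x w) = \<Sum>\<^sub>i (-1)\<^sup>i g x w\<^sub>i pf(w - w\<^sub>i)\<close>, defines a
  Pfaffian for every \<open>g\<close>. For it, induction on \<open>u\<close> alone gives Wenzel's exchange identity
  \<open>\<Sum>\<^sub>i (-1)\<^sup>i pf(u - u\<^sub>i) pf(u\<^sub>i v) = \<Sum>\<^sub>j (-1)\<^sup>j pf(u v\<^sub>j) pf(v - v\<^sub>j)\<close>.
  Taking \<open>u = \<alpha> x\<close> and \<open>v = \<alpha> \<gamma>\<close>, every term in which a letter of \<open>\<alpha>\<close> occurs twice vanishes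
  by alternation, leaving
  \<open>pf \<alpha> \<cdot> pf(\<alpha> x \<gamma>) = \<Sum>\<^sub>k (-1)\<^sup>k pf(\<alpha> x \<gamma>\<^sub>k) pf(\<alpha> (\<gamma> - \<gamma>\<^sub>k))\<close>.
  The right-hand side is the first-letter expansion of the Pfaffian of \<open>(x, y) \<mapsto> pf(\<alpha> x y)\<close>
  on \<open>x \<gamma>\<close>, so induction on \<open>n\<close> gives the theorem for the recursive Pfaffian.
  Finally, the sum over perfect matchings obeys the same first-letter recursion: removing the
  block of the first letter is a bijection onto the perfect matchings of the remaining letters,
  and moving that block to the front costs the sign \<open>(-1)\<^sup>i\<close>.
\<close>

section \<open>Deleting letters and reindexing sums\<close>

definition del_nth :: "nat \<Rightarrow> 'a list \<Rightarrow> 'a list" where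
  "del_nth i w = take i w @ drop (Suc i) w"

lemma length_del_nth [simp]: "i < length w \<Longrightarrow> length (del_nth i w) = length w - 1"
  by (simp add: del_nth_def)

lemma length_del_nth_le: "length (del_nth i w) \<le> length w"
  by (simp add: del_nth_def)

lemma nth_del_nth:
  "i < length w \<Longrightarrow> k < length w - 1 \<Longrightarrow> del_nth i w ! k = w ! (if k < i then k else Suc k)"
  by (auto simp: del_nth_def nth_append min_def)

lemma del_nth_Cons_0 [simp]: "del_nth 0 (x # w) = w"
  by (simp add: del_nth_def)

lemma del_nth_Cons_Suc [simp]: "del_nth (Suc i) (x # w) = x # del_nth i w"
  by (simp add: del_nth_def)

lemma del_nth_append:
  "del_nth i (u @ v) = (if i < length u then del_nth i u @ v else u @ del_nth (i - length u) v)"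
  by (auto simp: del_nth_def Suc_diff_le)

lemma set_del_nth_subset: "set (del_nth i w) \<subseteq> set w"
  unfolding del_nth_def using set_take_subset set_drop_subset by fastforce

lemma distinct_del_nth: "distinct w \<Longrightarrow> distinct (del_nth i w)"
  unfolding del_nth_def
  by (auto simp: set_take_disj_set_drop_if_distinct dest: in_set_takeD in_set_dropD)

lemma set_del_nth:
  assumes "distinct w" "i < length w"
  shows "set (del_nth i w) = set w - {w ! i}"
proof -
  have w: "w = take i w @ w ! i # drop (Suc i) w"
    by (rule id_take_nth_drop[OF assms(2)])
  have "distinct (take i w @ w ! i # drop (Suc i) w)"
    using assms(1) w by simp
  then show ?thesis
    unfolding del_nth_def by (subst (3) w) auto
qed

lemma nth_append_pair_other:
  "i \<noteq> length u \<Longrightarrow> i \<noteq> Suc (length u) \<Longrightarrow> (u @ x # y # v) ! i = (u @ x' # y' # v) ! i"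
  by (auto simp: nth_append nth_Cons split: nat.split)

lemma del_nth_append_pair_other:
  assumes "i \<noteq> length u" "i \<noteq> Suc (length u)"
  shows "del_nth i (u @ x # y # v) =
    (if i < length u then del_nth i u else u) @ x # y # (if i < length u then v else del_nth (i - length u - 2) v)"
proof (cases "i < length u")
  case True
  then show ?thesis by (simp add: del_nth_append)
next
  case False
  with assms obtain k where "i - length u = Suc (Suc k)"
    by (metis Suc_diff_Suc diff_Suc_1 less_Suc_eq linorder_neqE_nat not_less_eq zero_less_diff)
  with False show ?thesis by (simp add: del_nth_append)
qed

abbreviation idx_del :: "nat \<Rightarrow> nat \<Rightarrow> nat" where
  "idx_del i q \<equiv> if q < i then q else q - 1"

lemma nth_del_nth_idx_del:
  "i < length w \<Longrightarrow> q < length w \<Longrightarrow> q \<noteq> i \<Longrightarrow> del_nth i w ! idx_del i q = w ! q"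
  by (subst nth_del_nth) auto

lemma del_nth_del_nth_commute:
  assumes "i < length w" "q < length w" "i \<noteq> q"
  shows "del_nth (idx_del i q) (del_nth i w) = del_nth (idx_del q i) (del_nth q w)"
proof (rule nth_equalityI)
  show "length (del_nth (idx_del i q) (del_nth i w)) = length (del_nth (idx_del q i) (del_nth q w))"
    using assms by auto
  have idx: "idx_del i q < length w - 1" "idx_del q i < length w - 1"
    using assms by auto
  fix k assume "k < length (del_nth (idx_del i q) (del_nth i w))"
  then have k: "k < length w - 2"
    using assms idx by auto
  let ?k1 = "if k < idx_del i q then k else Suc k" and ?k2 = "if k < idx_del q i then k else Suc k"
  have "del_nth (idx_del i q) (del_nth i w) ! k = w ! (if ?k1 < i then ?k1 else Suc ?k1)"
    using idx k assms by (simp add: nth_del_nth)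
  also have "\<dots> = w ! (if ?k2 < q then ?k2 else Suc ?k2)"
    using assms by (intro arg_cong[of _ _ "(!) w"]) presburger
  also have "\<dots> = del_nth (idx_del q i) (del_nth q w) ! k"
    using idx k assms by (simp add: nth_del_nth)
  finally show "del_nth (idx_del i q) (del_nth i w) ! k = del_nth (idx_del q i) (del_nth q w) ! k" .
qed

lemma sum_lessThan_idx_del:
  assumes "i < m"
  shows "(\<Sum>k<m - 1. h k) = (\<Sum>q\<in>{..<m} - {i}. h (idx_del i q))"
proof -
  have "bij_betw (\<lambda>q. idx_del i q) ({..<m} - {i}) {..<m - 1}"
    by (rule bij_betw_byWitness[where f' = "\<lambda>k. if k < i then k else Suc k"]) (use assms in auto)
  from sum.reindex_bij_betw[OF this, of h] show ?thesis by simp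
qed

lemma sum_off_diagonal_swap:
  fixes t :: "nat \<Rightarrow> nat \<Rightarrow> 'b::comm_monoid_add"
  shows "(\<Sum>i<m. \<Sum>q\<in>{..<m} - {i}. t i q) = (\<Sum>i<m. \<Sum>q\<in>{..<m} - {i}. t q i)"
proof -
  have "(\<Sum>i<m. \<Sum>q\<in>{..<m} - {i}. t i q) = (\<Sum>p\<in>(SIGMA i:{..<m}. {..<m} - {i}). t (fst p) (snd p))"
    by (subst sum.Sigma) (auto simp: split_beta)
  also have "\<dots> = (\<Sum>p\<in>(SIGMA i:{..<m}. {..<m} - {i}). t (snd p) (fst p))"
    by (rule sum.reindex_bij_witness[where i = prod.swap and j = prod.swap]) auto
  also have "\<dots> = (\<Sum>i<m. \<Sum>q\<in>{..<m} - {i}. t q i)"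
    by (subst sum.Sigma) (auto simp: split_beta)
  finally show ?thesis .
qed

text \<open>Not a consequence of the previous lemma: in characteristic 2 a sum equal to its negative need not vanish.\<close>

lemma sum_off_diagonal_antisym:
  fixes t :: "nat \<Rightarrow> nat \<Rightarrow> 'r::comm_ring_1"
  assumes "\<And>i q. i \<noteq> q \<Longrightarrow> i < m \<Longrightarrow> q < m \<Longrightarrow> t q i = - t i q"
  shows "(\<Sum>i<m. \<Sum>q\<in>{..<m} - {i}. t i q) = 0"
proof -
  let ?lo = "{p. fst p < snd p \<and> snd p < m}" and ?hi = "{p. snd p < fst p \<and> fst p < m}"
  have fin: "finite ?lo" "finite ?hi"
    by (rule finite_subset[of _ "{..<m} \<times> {..<m}"]; auto)+
  have "(\<Sum>i<m. \<Sum>q\<in>{..<m} - {i}. t i q) = (\<Sum>p\<in>(SIGMA i:{..<m}. {..<m} - {i}). t (fst p) (snd p))"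
    by (subst sum.Sigma) (auto simp: split_beta)
  also have "(SIGMA i:{..<m}. {..<m} - {i}) = ?lo \<union> ?hi"
    by auto
  also have "(\<Sum>p\<in>?lo \<union> ?hi. t (fst p) (snd p)) = (\<Sum>p\<in>?lo. t (fst p) (snd p)) + (\<Sum>p\<in>?hi. t (fst p) (snd p))"
    by (rule sum.union_disjoint) (use fin in auto)
  also have "(\<Sum>p\<in>?hi. t (fst p) (snd p)) = (\<Sum>p\<in>?lo. t (snd p) (fst p))"
    by (rule sum.reindex_bij_witness[where i = prod.swap and j = prod.swap]) auto
  also have "\<dots> = - (\<Sum>p\<in>?lo. t (fst p) (snd p))"
    unfolding sum_negf[symmetric] by (rule sum.cong[OF refl]) (rule assms, auto)
  finally show ?thesis by simp
qed

lemma sum_lessThan_remove_pair: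
  assumes "Suc p < n"
  shows "(\<Sum>i<n. h i) = h p + h (Suc p) + (\<Sum>i\<in>{..<n} - {p, Suc p}. h i)"
proof -
  have "(\<Sum>i<n. h i) = h p + (\<Sum>i\<in>{..<n} - {p}. h i)"
    using assms by (subst sum.remove[of _ p]) auto
  also have "(\<Sum>i\<in>{..<n} - {p}. h i) = h (Suc p) + (\<Sum>i\<in>{..<n} - {p} - {Suc p}. h i)"
    using assms by (subst sum.remove[of _ "Suc p"]) auto
  also have "{..<n} - {p} - {Suc p} = {..<n} - {p, Suc p}"
    by auto
  finally show ?thesis by (simp add: add.assoc)
qed

lemma sum_lessThan_add:
  fixes h :: "nat \<Rightarrow> 'b::comm_monoid_add"
  shows "(\<Sum>j<a + b. h j) = (\<Sum>j<a. h j) + (\<Sum>k<b. h (a + k))"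
  by (induction b) (simp_all add: add.assoc)

text \<open>The sign picked up by expanding first at position \<open>i\<close> and then at the former position \<open>q\<close>.\<close>

definition pair_sign :: "nat \<Rightarrow> nat \<Rightarrow> 'r::comm_ring_1" where
  "pair_sign i q = (-1) ^ (i + q) * (if q < i then 1 else -1)"

lemma pair_sign_swap: "i \<noteq> q \<Longrightarrow> pair_sign q i = - pair_sign i q"
  by (auto simp: pair_sign_def add.commute)

lemma power_minus_one_idx_del:
  assumes "q \<noteq> i"
  shows "(-1::'r::comm_ring_1) ^ i * (-1) ^ idx_del i q = pair_sign i q"
proof (cases "q < i")
  case True
  then show ?thesis by (simp add: pair_sign_def power_add)
next
  case False
  with assms obtain r where "q = Suc r" by (cases q) auto
  with False show ?thesis by (simp add: pair_sign_def power_add)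
qed

section \<open>The Pfaffian by expansion along the first letter\<close>

fun pfaff :: "('a \<Rightarrow> 'a \<Rightarrow> 'r::comm_ring_1) \<Rightarrow> 'a list \<Rightarrow> 'r" where
  "pfaff g [] = 1"
| "pfaff g (x # w) = (\<Sum>i<length w. (-1) ^ i * g x (w ! i) * pfaff g (del_nth i w))"

lemma pfaff_odd: "odd (length w) \<Longrightarrow> pfaff g w = 0"
proof (induction "length w" arbitrary: w rule: less_induct)
  case less
  show ?case
  proof (cases w)
    case Nil
    with less show ?thesis by simp
  next
    case (Cons x w')
    have "pfaff g (del_nth i w') = 0" if "i < length w'" for i
      using less Cons that by (intro less(1)) auto
    with Cons show ?thesis by simp
  qed
qed

lemma pfaff_Cons_del_nth:
  assumes "i < length w"
  shows "pfaff g (y # del_nth i w) = (\<Sum>q\<in>{..<length w} - {i}.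
    (-1) ^ idx_del i q * g y (w ! q) * pfaff g (del_nth (idx_del i q) (del_nth i w)))"
proof -
  have "pfaff g (y # del_nth i w) =
      (\<Sum>k<length w - 1. (-1) ^ k * g y (del_nth i w ! k) * pfaff g (del_nth k (del_nth i w)))"
    using assms by simp
  also have "\<dots> = (\<Sum>q\<in>{..<length w} - {i}.
      (-1) ^ idx_del i q * g y (w ! q) * pfaff g (del_nth (idx_del i q) (del_nth i w)))"
    unfolding sum_lessThan_idx_del[OF assms]
    by (rule sum.cong) (use assms in \<open>auto simp: nth_del_nth_idx_del\<close>)
  finally show ?thesis .
qed

lemma pfaff_Cons_del_nth_pair_sign:
  fixes g :: "'a \<Rightarrow> 'a \<Rightarrow> 'r::comm_ring_1"
  assumes "i < length w"
  shows "(-1) ^ i * pfaff g (y # del_nth i w) = (\<Sum>q\<in>{..<length w} - {i}.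
    pair_sign i q * g y (w ! q) * pfaff g (del_nth (idx_del i q) (del_nth i w)))"
proof -
  have "(-1) ^ i * pfaff g (y # del_nth i w) = (\<Sum>q\<in>{..<length w} - {i}.
      ((-1) ^ i * (-1) ^ idx_del i q) * g y (w ! q) * pfaff g (del_nth (idx_del i q) (del_nth i w)))"
    unfolding pfaff_Cons_del_nth[OF assms] by (simp only: sum_distrib_left mult_ac)
  also have "\<dots> = (\<Sum>q\<in>{..<length w} - {i}.
      pair_sign i q * g y (w ! q) * pfaff g (del_nth (idx_del i q) (del_nth i w)))"
  proof (rule sum.cong[OF refl])
    fix q assume "q \<in> {..<length w} - {i}"
    then have "(-1::'r) ^ i * (-1) ^ idx_del i q = pair_sign i q"
      by (intro power_minus_one_idx_del) simp
    then show "((-1) ^ i * (-1) ^ idx_del i q) * g y (w ! q) * pfaff g (del_nth (idx_del i q) (del_nth i w)) =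
        pair_sign i q * g y (w ! q) * pfaff g (del_nth (idx_del i q) (del_nth i w))"
      by (simp only:)
  qed
  finally show ?thesis .
qed

lemma pfaff_Cons_Cons:
  fixes g :: "'a \<Rightarrow> 'a \<Rightarrow> 'r::comm_ring_1"
  shows "pfaff g (x # y # w) = g x y * pfaff g w -
     (\<Sum>i<length w. \<Sum>q\<in>{..<length w} - {i}.
        pair_sign i q * g x (w ! i) * g y (w ! q) * pfaff g (del_nth (idx_del i q) (del_nth i w)))"
proof -
  let ?t = "\<lambda>i q. pair_sign i q * g x (w ! i) * g y (w ! q) * pfaff g (del_nth (idx_del i q) (del_nth i w))"
  have inner: "(-1) ^ Suc i * g x (w ! i) * pfaff g (y # del_nth i w) = - (\<Sum>q\<in>{..<length w} - {i}. ?t i q)"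
    if i: "i < length w" for i
  proof -
    have "(-1) ^ Suc i * g x (w ! i) * pfaff g (y # del_nth i w) =
        - (g x (w ! i) * ((-1) ^ i * pfaff g (y # del_nth i w)))"
      by (simp only: power_Suc mult_minus1 mult_minus_left mult_minus_right mult_1_left mult_ac)
    also have "\<dots> = - (\<Sum>q\<in>{..<length w} - {i}. ?t i q)"
      unfolding pfaff_Cons_del_nth_pair_sign[OF i] sum_distrib_left by (simp only: mult_ac)
    finally show ?thesis .
  qed
  have "pfaff g (x # y # w) =
      g x y * pfaff g w + (\<Sum>i<length w. (-1) ^ Suc i * g x (w ! i) * pfaff g (y # del_nth i w))"
    by (simp only: pfaff.simps length_Cons sum.lessThan_Suc_shift) simp
  also have "(\<Sum>i<length w. (-1) ^ Suc i * g x (w ! i) * pfaff g (y # del_nth i w)) =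
      (\<Sum>i<length w. - (\<Sum>q\<in>{..<length w} - {i}. ?t i q))"
    by (rule sum.cong[OF refl]) (rule inner, simp)
  finally show ?thesis by (simp add: sum_negf)
qed

lemma pfaff_Cons_append_pair:
  "pfaff g (a # u @ x # y # v) =
     (-1) ^ length u * g a x * pfaff g (u @ y # v) - (-1) ^ length u * g a y * pfaff g (u @ x # v) +
     (\<Sum>i\<in>{..<length u + 2 + length v} - {length u, Suc (length u)}.
        (-1) ^ i * g a ((u @ x # y # v) ! i) * pfaff g (del_nth i (u @ x # y # v)))"
proof -
  let ?w = "u @ x # y # v" and ?p = "length u"
  have "pfaff g (a # ?w) = (\<Sum>i<?p + 2 + length v. (-1) ^ i * g a (?w ! i) * pfaff g (del_nth i ?w))"
    by simp
  also have "\<dots> = (-1) ^ ?p * g a (?w ! ?p) * pfaff g (del_nth ?p ?w) +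
      (-1) ^ Suc ?p * g a (?w ! Suc ?p) * pfaff g (del_nth (Suc ?p) ?w) +
      (\<Sum>i\<in>{..<?p + 2 + length v} - {?p, Suc ?p}. (-1) ^ i * g a (?w ! i) * pfaff g (del_nth i ?w))"
    by (rule sum_lessThan_remove_pair) simp
  finally show ?thesis
    by (simp add: del_nth_append nth_append)
qed

lemma pfaff_repeat_front:
  fixes g :: "'a \<Rightarrow> 'a \<Rightarrow> 'r::comm_ring_1"
  assumes "g x x = 0"
  shows "pfaff g (x # x # w) = 0"
proof -
  define t where "t i q = pair_sign i q * g x (w ! i) * g x (w ! q) * pfaff g (del_nth (idx_del i q) (del_nth i w))"
    for i q
  have "(\<Sum>i<length w. \<Sum>q\<in>{..<length w} - {i}. t i q) = 0"
  proof (rule sum_off_diagonal_antisym)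
    fix i q assume iq: "i \<noteq> q" "i < length w" "q < length w"
    then have "pair_sign q i = (- pair_sign i q :: 'r)"
      by (intro pair_sign_swap) auto
    moreover from iq have "del_nth (idx_del q i) (del_nth q w) = del_nth (idx_del i q) (del_nth i w)"
      by (intro del_nth_del_nth_commute) auto
    ultimately show "t q i = - t i q"
      unfolding t_def by (simp add: mult_ac)
  qed
  then show ?thesis
    unfolding pfaff_Cons_Cons t_def[symmetric] assms by simp
qed

locale skew_form =
  fixes g :: "'a \<Rightarrow> 'a \<Rightarrow> 'r::comm_ring_1"
  assumes skew: "g x y = - g y x"
begin

lemma pfaff_swap_front: "pfaff g (x # y # w) = - pfaff g (y # x # w)"
proof -
  define t where "t x y i q = pair_sign i q * g x (w ! i) * g y (w ! q) * pfaff g (del_nth (idx_del i q) (del_nth i w))"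
    for x y i q
  have "(\<Sum>i<length w. \<Sum>q\<in>{..<length w} - {i}. t y x i q) = (\<Sum>i<length w. \<Sum>q\<in>{..<length w} - {i}. t y x q i)"
    by (rule sum_off_diagonal_swap)
  also have "\<dots> = (\<Sum>i<length w. \<Sum>q\<in>{..<length w} - {i}. - t x y i q)"
  proof (intro sum.cong refl)
    fix i q assume iq: "i \<in> {..<length w}" "q \<in> {..<length w} - {i}"
    then have "pair_sign q i = (- pair_sign i q :: 'r)"
      by (intro pair_sign_swap) auto
    moreover from iq have "del_nth (idx_del q i) (del_nth q w) = del_nth (idx_del i q) (del_nth i w)"
      by (intro del_nth_del_nth_commute) auto
    ultimately show "t y x q i = - t x y i q"
      unfolding t_def by (simp add: mult_ac)
  qed
  finally have "(\<Sum>i<length w. \<Sum>q\<in>{..<length w} - {i}. t y x i q) =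
      - (\<Sum>i<length w. \<Sum>q\<in>{..<length w} - {i}. t x y i q)"
    by (simp add: sum_negf)
  then show ?thesis
    unfolding pfaff_Cons_Cons t_def[symmetric] using skew[of x y] by (simp add: algebra_simps)
qed

lemma pfaff_swap: "pfaff g (u @ x # y # v) = - pfaff g (u @ y # x # v)"
proof (induction "length u" arbitrary: u v rule: less_induct)
  case less
  show ?case
  proof (cases u)
    case Nil
    then show ?thesis
      using pfaff_swap_front[of x y v] by (simp only: append_Nil)
  next
    case (Cons a u')
    let ?I = "{..<length u' + 2 + length v} - {length u', Suc (length u')}"
    have "(\<Sum>i\<in>?I. (-1) ^ i * g a ((u' @ x # y # v) ! i) * pfaff g (del_nth i (u' @ x # y # v))) =
        (\<Sum>i\<in>?I. - ((-1) ^ i * g a ((u' @ y # x # v) ! i) * pfaff g (del_nth i (u' @ y # x # v))))"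
    proof (rule sum.cong[OF refl])
      fix i assume "i \<in> ?I"
      then have i: "i \<noteq> length u'" "i \<noteq> Suc (length u')"
        by auto
      define c where "c = (if i < length u' then del_nth i u' else u')"
      define d where "d = (if i < length u' then v else del_nth (i - length u' - 2) v)"
      have "length c < length u"
        using length_del_nth_le[of i u'] Cons by (auto simp: c_def)
      then have "pfaff g (c @ x # y # d) = - pfaff g (c @ y # x # d)"
        by (rule less)
      moreover have "del_nth i (u' @ x' # y' # v) = c @ x' # y' # d" for x' y'
        unfolding c_def d_def by (rule del_nth_append_pair_other[OF i])
      ultimately show "(-1) ^ i * g a ((u' @ x # y # v) ! i) * pfaff g (del_nth i (u' @ x # y # v)) =
          - ((-1) ^ i * g a ((u' @ y # x # v) ! i) * pfaff g (del_nth i (u' @ y # x # v)))"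
        using nth_append_pair_other[OF i, of x y v y x] by simp
    qed
    then show ?thesis
      unfolding Cons append_Cons pfaff_Cons_append_pair by (simp add: sum_negf algebra_simps)
  qed
qed

lemma pfaff_move: "pfaff g (u @ v @ x # w) = (-1) ^ length v * pfaff g (u @ x # v @ w)"
proof (induction v arbitrary: u)
  case Nil
  then show ?case by simp
next
  case (Cons b v)
  have "pfaff g (u @ (b # v) @ x # w) = pfaff g ((u @ [b]) @ v @ x # w)"
    by simp
  also have "\<dots> = (-1) ^ length v * pfaff g ((u @ [b]) @ x # v @ w)"
    by (rule Cons)
  also have "pfaff g ((u @ [b]) @ x # v @ w) = - pfaff g (u @ x # b # v @ w)"
    using pfaff_swap[of u b x "v @ w"] by simp
  finally show ?case by simp
qed

end

locale alternating_form = skew_form +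
  assumes diag: "g x x = 0"
begin

lemma pfaff_repeat: "pfaff g (u @ x # x # v) = 0"
proof (induction "length u" arbitrary: u v rule: less_induct)
  case less
  show ?case
  proof (cases u)
    case Nil
    then show ?thesis
      using pfaff_repeat_front[of g x v, OF diag] by (simp only: append_Nil)
  next
    case (Cons a u')
    let ?I = "{..<length u' + 2 + length v} - {length u', Suc (length u')}"
    have "(\<Sum>i\<in>?I. (-1) ^ i * g a ((u' @ x # x # v) ! i) * pfaff g (del_nth i (u' @ x # x # v))) = 0"
    proof (rule sum.neutral, rule ballI)
      fix i assume "i \<in> ?I"
      then have i: "i \<noteq> length u'" "i \<noteq> Suc (length u')"
        by auto
      define c where "c = (if i < length u' then del_nth i u' else u')"
      define d where "d = (if i < length u' then v else del_nth (i - length u' - 2) v)"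
      have "length c < length u"
        using length_del_nth_le[of i u'] Cons by (auto simp: c_def)
      then have "pfaff g (c @ x # x # d) = 0"
        by (rule less)
      moreover have "del_nth i (u' @ x # x # v) = c @ x # x # d"
        unfolding c_def d_def by (rule del_nth_append_pair_other[OF i])
      ultimately show "(-1) ^ i * g a ((u' @ x # x # v) ! i) * pfaff g (del_nth i (u' @ x # x # v)) = 0"
        by simp
    qed
    then show ?thesis
      unfolding Cons append_Cons pfaff_Cons_append_pair by simp
  qed
qed

lemma pfaff_not_distinct: "\<not> distinct w \<Longrightarrow> pfaff g w = 0"
proof -
  assume "\<not> distinct w"
  then obtain u v w' y where w: "w = u @ [y] @ v @ [y] @ w'"
    using not_distinct_decomp by blast
  have "pfaff g w = pfaff g ((u @ [y]) @ v @ y # w')"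
    by (simp add: w)
  also have "\<dots> = (-1) ^ length v * pfaff g ((u @ [y]) @ y # v @ w')"
    by (rule pfaff_move)
  also have "pfaff g ((u @ [y]) @ y # v @ w') = 0"
    using pfaff_repeat[of u y "v @ w'"] by simp
  finally show ?thesis by simp
qed

end

section \<open>The exchange identity\<close>

definition exchange_lhs :: "('a \<Rightarrow> 'a \<Rightarrow> 'r::comm_ring_1) \<Rightarrow> 'a list \<Rightarrow> 'a list \<Rightarrow> 'r" where
  "exchange_lhs g u v = (\<Sum>i<length u. (-1) ^ i * pfaff g (del_nth i u) * pfaff g (u ! i # v))"

definition exchange_rhs :: "('a \<Rightarrow> 'a \<Rightarrow> 'r::comm_ring_1) \<Rightarrow> 'a list \<Rightarrow> 'a list \<Rightarrow> 'r" where
  "exchange_rhs g u v = (\<Sum>j<length v. (-1) ^ j * pfaff g (u @ [v ! j]) * pfaff g (del_nth j v))"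

lemma exchange_lhs_del_nth:
  assumes "i < length u"
  shows "exchange_lhs g (del_nth i u) v = (\<Sum>q\<in>{..<length u} - {i}.
    (-1) ^ idx_del i q * pfaff g (del_nth (idx_del i q) (del_nth i u)) * pfaff g (u ! q # v))"
proof -
  have "exchange_lhs g (del_nth i u) v =
      (\<Sum>k<length u - 1. (-1) ^ k * pfaff g (del_nth k (del_nth i u)) * pfaff g (del_nth i u ! k # v))"
    using assms by (simp add: exchange_lhs_def)
  also have "\<dots> = (\<Sum>q\<in>{..<length u} - {i}.
      (-1) ^ idx_del i q * pfaff g (del_nth (idx_del i q) (del_nth i u)) * pfaff g (u ! q # v))"
    unfolding sum_lessThan_idx_del[OF assms]
    by (rule sum.cong) (use assms in \<open>auto simp: nth_del_nth_idx_del\<close>)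
  finally show ?thesis .
qed

lemma exchange_lhs_Cons:
  fixes g :: "'a \<Rightarrow> 'a \<Rightarrow> 'r::comm_ring_1"
  shows "exchange_lhs g (a # u) v =
    pfaff g u * pfaff g (a # v) + (\<Sum>i<length u. (-1) ^ i * g a (u ! i) * exchange_lhs g (del_nth i u) v)"
proof -
  let ?m = "length u"
  define t where "t i q = - pair_sign i q * g a (u ! q) * pfaff g (del_nth (idx_del i q) (del_nth i u)) *
    pfaff g (u ! i # v)" for i q
  have "exchange_lhs g (a # u) v = pfaff g u * pfaff g (a # v) +
      (\<Sum>i<?m. (-1) ^ Suc i * pfaff g (a # del_nth i u) * pfaff g (u ! i # v))"
    unfolding exchange_lhs_def by (simp only: length_Cons sum.lessThan_Suc_shift) simp
  also have "(\<Sum>i<?m. (-1) ^ Suc i * pfaff g (a # del_nth i u) * pfaff g (u ! i # v)) =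
      (\<Sum>i<?m. \<Sum>q\<in>{..<?m} - {i}. t i q)"
  proof (rule sum.cong[OF refl])
    fix i assume "i \<in> {..<?m}"
    then have i: "i < ?m" by simp
    have "(-1) ^ Suc i * pfaff g (a # del_nth i u) * pfaff g (u ! i # v) =
        - ((-1) ^ i * pfaff g (a # del_nth i u) * pfaff g (u ! i # v))"
      by (simp only: power_Suc mult_minus1 mult_minus_left mult_1_left)
    also have "\<dots> = (\<Sum>q\<in>{..<?m} - {i}. t i q)"
      unfolding pfaff_Cons_del_nth_pair_sign[OF i] t_def sum_distrib_right sum_negf[symmetric]
      by (simp only: mult_minus_left)
    finally show "(-1) ^ Suc i * pfaff g (a # del_nth i u) * pfaff g (u ! i # v) = (\<Sum>q\<in>{..<?m} - {i}. t i q)" .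
  qed
  also have "\<dots> = (\<Sum>i<?m. \<Sum>q\<in>{..<?m} - {i}. t q i)"
    by (rule sum_off_diagonal_swap)
  also have "\<dots> = (\<Sum>i<?m. (-1) ^ i * g a (u ! i) * exchange_lhs g (del_nth i u) v)"
  proof (rule sum.cong[OF refl])
    fix i assume "i \<in> {..<?m}"
    then have i: "i < ?m" by simp
    show "(\<Sum>q\<in>{..<?m} - {i}. t q i) = (-1) ^ i * g a (u ! i) * exchange_lhs g (del_nth i u) v"
      unfolding exchange_lhs_del_nth[OF i] sum_distrib_left
    proof (rule sum.cong[OF refl])
      fix q assume q: "q \<in> {..<?m} - {i}"
      then have "pair_sign q i = (- pair_sign i q :: 'r)"
        by (intro pair_sign_swap) auto
      moreover from q i have "del_nth (idx_del q i) (del_nth q u) = del_nth (idx_del i q) (del_nth i u)"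
        by (intro del_nth_del_nth_commute) auto
      moreover from q have "pair_sign i q = (-1::'r) ^ i * (-1) ^ idx_del i q"
        by (intro power_minus_one_idx_del[symmetric]) simp
      ultimately show "t q i = (-1) ^ i * g a (u ! i) *
          ((-1) ^ idx_del i q * pfaff g (del_nth (idx_del i q) (del_nth i u)) * pfaff g (u ! q # v))"
        unfolding t_def by (simp only:) (simp add: mult_ac)
    qed
  qed
  finally show ?thesis .
qed

lemma exchange_rhs_Cons:
  fixes g :: "'a \<Rightarrow> 'a \<Rightarrow> 'r::comm_ring_1"
  shows "exchange_rhs g (a # u) v = (-1) ^ length u * pfaff g u * pfaff g (a # v) +
    (\<Sum>k<length u. (-1) ^ k * g a (u ! k) * exchange_rhs g (del_nth k u) v)"
proof -
  let ?m = "length u"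
  have expand: "pfaff g (a # u @ [y]) =
      (\<Sum>k<?m. (-1) ^ k * g a (u ! k) * pfaff g (del_nth k u @ [y])) + (-1) ^ ?m * g a y * pfaff g u" for y
  proof -
    have "pfaff g (a # u @ [y]) = (\<Sum>k<Suc ?m. (-1) ^ k * g a ((u @ [y]) ! k) * pfaff g (del_nth k (u @ [y])))"
      by simp
    also have "\<dots> = (\<Sum>k<?m. (-1) ^ k * g a ((u @ [y]) ! k) * pfaff g (del_nth k (u @ [y]))) +
        (-1) ^ ?m * g a y * pfaff g u"
      by (simp add: del_nth_append)
    also have "(\<Sum>k<?m. (-1) ^ k * g a ((u @ [y]) ! k) * pfaff g (del_nth k (u @ [y]))) =
        (\<Sum>k<?m. (-1) ^ k * g a (u ! k) * pfaff g (del_nth k u @ [y]))"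
      by (rule sum.cong) (auto simp: del_nth_append nth_append)
    finally show ?thesis .
  qed
  have "exchange_rhs g (a # u) v = (\<Sum>j<length v. (-1) ^ j *
      ((\<Sum>k<?m. (-1) ^ k * g a (u ! k) * pfaff g (del_nth k u @ [v ! j])) + (-1) ^ ?m * g a (v ! j) * pfaff g u) *
      pfaff g (del_nth j v))"
    unfolding exchange_rhs_def by (simp only: append_Cons expand)
  also have "\<dots> = (\<Sum>j<length v. \<Sum>k<?m. (-1) ^ k * g a (u ! k) *
        ((-1) ^ j * pfaff g (del_nth k u @ [v ! j]) * pfaff g (del_nth j v))) +
      (\<Sum>j<length v. (-1) ^ ?m * pfaff g u * ((-1) ^ j * g a (v ! j) * pfaff g (del_nth j v)))"
    by (simp add: sum.distrib sum_distrib_left sum_distrib_right distrib_left distrib_right mult_ac)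
  also have "(\<Sum>j<length v. \<Sum>k<?m. (-1) ^ k * g a (u ! k) *
        ((-1) ^ j * pfaff g (del_nth k u @ [v ! j]) * pfaff g (del_nth j v))) =
      (\<Sum>k<?m. (-1) ^ k * g a (u ! k) * exchange_rhs g (del_nth k u) v)"
    by (subst sum.swap) (simp add: exchange_rhs_def sum_distrib_left)
  also have "(\<Sum>j<length v. (-1) ^ ?m * pfaff g u * ((-1) ^ j * g a (v ! j) * pfaff g (del_nth j v))) =
      (-1) ^ ?m * pfaff g u * pfaff g (a # v)"
    by (simp add: sum_distrib_left)
  finally show ?thesis by simp
qed

text \<open>
  No hypothesis on \<open>g\<close> is needed: the recursions for the two sides differ only in the sign
  \<open>(-1) ^ length u\<close> of the term \<open>pfaff g u * pfaff g (a # v)\<close>, which vanishes when \<open>u\<close> has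
  odd length.
\<close>

theorem exchange_identity: "exchange_lhs g u v = exchange_rhs g u v"
proof (induction "length u" arbitrary: u rule: less_induct)
  case less
  show ?case
  proof (cases u)
    case Nil
    then show ?thesis by (simp add: exchange_lhs_def exchange_rhs_def)
  next
    case (Cons a u')
    have "exchange_lhs g (del_nth k u') v = exchange_rhs g (del_nth k u') v" if "k < length u'" for k
      using that Cons by (intro less) simp
    moreover have "pfaff g u' * pfaff g (a # v) = (-1) ^ length u' * pfaff g u' * pfaff g (a # v)"
      using pfaff_odd[of u' g] by (cases "even (length u')") auto
    ultimately show ?thesis
      unfolding Cons exchange_lhs_Cons exchange_rhs_Cons by simp
  qed
qed

context alternating_form
begin

lemma pfaff_mul_pfaff_append_Cons:
  assumes dist: "distinct (\<alpha> @ x # \<gamma>)" and ev: "even (length \<alpha>)"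
  shows "pfaff g \<alpha> * pfaff g (\<alpha> @ x # \<gamma>) =
    (\<Sum>k<length \<gamma>. (-1) ^ k * pfaff g (\<alpha> @ [x, \<gamma> ! k]) * pfaff g (\<alpha> @ del_nth k \<gamma>))"
proof -
  let ?u = "\<alpha> @ [x]" and ?v = "\<alpha> @ \<gamma>"
  have "exchange_lhs g ?u ?v = (\<Sum>i<length \<alpha>. (-1) ^ i * pfaff g (del_nth i ?u) * pfaff g (?u ! i # ?v)) +
      (-1) ^ length \<alpha> * pfaff g \<alpha> * pfaff g (x # ?v)"
    unfolding exchange_lhs_def by (simp add: del_nth_append)
  also have "(\<Sum>i<length \<alpha>. (-1) ^ i * pfaff g (del_nth i ?u) * pfaff g (?u ! i # ?v)) = 0"
  proof (rule sum.neutral, rule ballI)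
    fix i assume "i \<in> {..<length \<alpha>}"
    then have "\<not> distinct (?u ! i # ?v)"
      by (simp add: nth_append)
    from pfaff_not_distinct[OF this] show "(-1) ^ i * pfaff g (del_nth i ?u) * pfaff g (?u ! i # ?v) = 0"
      by (simp only: mult_zero_right)
  qed
  also have "pfaff g (x # ?v) = pfaff g (\<alpha> @ x # \<gamma>)"
    using pfaff_move[of "[]" \<alpha> x \<gamma>] ev by simp
  finally have lhs: "exchange_lhs g ?u ?v = pfaff g \<alpha> * pfaff g (\<alpha> @ x # \<gamma>)"
    using ev by simp
  have "exchange_rhs g ?u ?v = (\<Sum>j<length \<alpha>. (-1) ^ j * pfaff g (?u @ [?v ! j]) * pfaff g (del_nth j ?v)) +
      (\<Sum>k<length \<gamma>. (-1) ^ (length \<alpha> + k) * pfaff g (?u @ [?v ! (length \<alpha> + k)]) *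
        pfaff g (del_nth (length \<alpha> + k) ?v))"
    unfolding exchange_rhs_def by (simp add: sum_lessThan_add)
  also have "(\<Sum>j<length \<alpha>. (-1) ^ j * pfaff g (?u @ [?v ! j]) * pfaff g (del_nth j ?v)) = 0"
  proof (rule sum.neutral, rule ballI)
    fix j assume "j \<in> {..<length \<alpha>}"
    then have "\<not> distinct (?u @ [?v ! j])"
      by (simp add: nth_append)
    from pfaff_not_distinct[OF this] show "(-1) ^ j * pfaff g (?u @ [?v ! j]) * pfaff g (del_nth j ?v) = 0"
      by (simp only: mult_zero_right mult_zero_left)
  qed
  also have "(\<Sum>k<length \<gamma>. (-1) ^ (length \<alpha> + k) * pfaff g (?u @ [?v ! (length \<alpha> + k)]) *
        pfaff g (del_nth (length \<alpha> + k) ?v)) =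
      (\<Sum>k<length \<gamma>. (-1) ^ k * pfaff g (\<alpha> @ [x, \<gamma> ! k]) * pfaff g (\<alpha> @ del_nth k \<gamma>))"
    using ev by (intro sum.cong refl) (simp add: del_nth_append power_add)
  finally have rhs: "exchange_rhs g ?u ?v = \<dots>"
    by simp
  show ?thesis
    using exchange_identity[of g ?u ?v] lhs rhs by simp
qed

lemma pfaff_power_mul_pfaff_append:
  assumes "distinct (\<alpha> @ \<beta>)" "even (length \<alpha>)" "length \<beta> = 2 * n" "n \<ge> 1"
  shows "pfaff g \<alpha> ^ (n - 1) * pfaff g (\<alpha> @ \<beta>) = pfaff (\<lambda>x y. pfaff g (\<alpha> @ [x, y])) \<beta>"
  using assms
proof (induction n arbitrary: \<beta>)
  case 0
  then show ?case by simp
next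
  case (Suc n)
  let ?h = "\<lambda>x y. pfaff g (\<alpha> @ [x, y])"
  show ?case
  proof (cases "n = 0")
    case True
    with Suc.prems(3) obtain x y where "\<beta> = [x, y]"
      by (cases \<beta>; cases "tl \<beta>"; auto)
    with True show ?thesis by simp
  next
    case False
    from Suc.prems(3) obtain x \<gamma> where \<beta>: "\<beta> = x # \<gamma>" and len: "length \<gamma> = Suc (2 * n)"
      by (cases \<beta>) auto
    have IH: "pfaff ?h (del_nth k \<gamma>) = pfaff g \<alpha> ^ (n - 1) * pfaff g (\<alpha> @ del_nth k \<gamma>)"
      if "k < length \<gamma>" for k
    proof -
      have "distinct (\<alpha> @ \<gamma>)"
        using Suc.prems(1) \<beta> by auto
      then have "distinct (\<alpha> @ del_nth k \<gamma>)"
        using distinct_del_nth[of \<gamma> k] set_del_nth_subset[of k \<gamma>] by auto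
      then show ?thesis
        using Suc.IH[of "del_nth k \<gamma>"] Suc.prems(2) False that len by simp
    qed
    have "pfaff ?h \<beta> = (\<Sum>k<length \<gamma>. (-1) ^ k * ?h x (\<gamma> ! k) * pfaff ?h (del_nth k \<gamma>))"
      by (simp add: \<beta>)
    also have "\<dots> = pfaff g \<alpha> ^ (n - 1) *
        (\<Sum>k<length \<gamma>. (-1) ^ k * pfaff g (\<alpha> @ [x, \<gamma> ! k]) * pfaff g (\<alpha> @ del_nth k \<gamma>))"
      by (simp add: IH sum_distrib_left mult_ac)
    also have "\<dots> = pfaff g \<alpha> ^ (n - 1) * (pfaff g \<alpha> * pfaff g (\<alpha> @ \<beta>))"
      using pfaff_mul_pfaff_append_Cons[of \<alpha> x \<gamma>] Suc.prems \<beta> by simp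
    also have "\<dots> = pfaff g \<alpha> ^ n * pfaff g (\<alpha> @ \<beta>)"
      using False by (cases n) (auto simp: mult_ac)
    finally show ?thesis by simp
  qed
qed

end

section \<open>Signs of rearrangements\<close>

definition rearrangement :: "'a list \<Rightarrow> 'a list \<Rightarrow> bool" where
  "rearrangement u v \<longleftrightarrow> distinct u \<and> distinct v \<and> set u = set v"

lemma rearrangement_length: "rearrangement u v \<Longrightarrow> length u = length v"
  unfolding rearrangement_def by (metis distinct_card)

lemma rearr_perm_nth:
  assumes "rearrangement u v" "i < length u"
  shows "rearr_perm u v i < length u \<and> u ! rearr_perm u v i = v ! i"
proof -
  have "v ! i \<in> set u"
    using assms rearrangement_length[OF assms(1)] unfolding rearrangement_def by (metis nth_mem)
  then have "\<exists>!j. j < length u \<and> u ! j = v ! i"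
    using assms(1) unfolding rearrangement_def by (intro distinct_Ex1) auto
  from theI'[OF this] show ?thesis
    using assms(2) unfolding rearr_perm_def by simp
qed

lemma rearr_perm_eqI:
  assumes "rearrangement u v" "i < length u" "j < length u" "u ! j = v ! i"
  shows "rearr_perm u v i = j"
  using rearr_perm_nth[OF assms(1,2)] assms(1,3,4) unfolding rearrangement_def
  by (metis nth_eq_iff_index_eq)

lemma rearr_perm_outside: "\<not> i < length u \<Longrightarrow> rearr_perm u v i = i"
  by (simp add: rearr_perm_def)

lemma rearr_perm_permutes:
  assumes "rearrangement u v"
  shows "rearr_perm u v permutes {..<length u}"
proof (rule inj_imp_permutes)
  show "inj_on (rearr_perm u v) {..<length u}"
  proof (rule inj_onI)
    fix i j assume ij: "i \<in> {..<length u}" "j \<in> {..<length u}" "rearr_perm u v i = rearr_perm u v j"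
    then have "v ! i = v ! j"
      using rearr_perm_nth[OF assms, of i] rearr_perm_nth[OF assms, of j] by auto
    then show "i = j"
      using ij rearrangement_length[OF assms] assms unfolding rearrangement_def
      by (simp add: nth_eq_iff_index_eq)
  qed
qed (use rearr_perm_nth[OF assms] rearr_perm_outside in auto)

lemma sgnw_rearrangement: "rearrangement u v \<Longrightarrow> sgnw u v = sign (rearr_perm u v)"
  by (simp add: sgnw_def rearrangement_def word_minus_def filter_False)

lemma sgnw_trans:
  assumes "rearrangement u w" "rearrangement w v"
  shows "sgnw u v = sgnw u w * sgnw w v"
proof -
  have uv: "rearrangement u v"
    using assms unfolding rearrangement_def by auto
  have len: "length u = length w" "length w = length v"
    using assms rearrangement_length by auto
  have "rearr_perm u v = rearr_perm u w \<circ> rearr_perm w v"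
  proof
    fix i
    show "rearr_perm u v i = (rearr_perm u w \<circ> rearr_perm w v) i"
    proof (cases "i < length u")
      case True
      then have "rearr_perm w v i < length w \<and> w ! rearr_perm w v i = v ! i"
        using rearr_perm_nth[OF assms(2)] len by auto
      moreover from this have "rearr_perm u w (rearr_perm w v i) < length u \<and>
          u ! rearr_perm u w (rearr_perm w v i) = w ! rearr_perm w v i"
        using rearr_perm_nth[OF assms(1)] len by auto
      ultimately show ?thesis
        using rearr_perm_eqI[OF uv True] by simp
    next
      case False
      then show ?thesis
        using len by (simp add: rearr_perm_outside)
    qed
  qed
  moreover have "permutation (rearr_perm u w)" "permutation (rearr_perm w v)"
    using assms rearr_perm_permutes permutation_permutes by blast+
  ultimately show ?thesis
    using assms uv by (simp add: sgnw_rearrangement sign_compose)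
qed

lemma sgnw_refl: "distinct u \<Longrightarrow> sgnw u u = 1"
proof -
  assume "distinct u"
  then have u: "rearrangement u u"
    by (simp add: rearrangement_def)
  have "rearr_perm u u = id"
  proof
    fix i
    show "rearr_perm u u i = id i"
      by (cases "i < length u") (auto simp: rearr_perm_eqI[OF u] rearr_perm_outside)
  qed
  with u show ?thesis
    by (simp add: sgnw_rearrangement)
qed

lemma sgnw_sym:
  assumes "rearrangement u v"
  shows "sgnw v u = sgnw u v"
proof -
  have vu: "rearrangement v u"
    using assms by (auto simp: rearrangement_def)
  have "sgnw u v * sgnw v u = 1"
    using sgnw_trans[OF assms vu] sgnw_refl[of u] assms by (simp add: rearrangement_def)
  moreover have "sgnw u v \<in> {1, -1}" "sgnw v u \<in> {1, -1}"
    using assms vu by (simp_all add: sgnw_rearrangement sign_def)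
  ultimately show ?thesis by auto
qed

lemma sgnw_swap:
  assumes "distinct (u @ x # y # v)"
  shows "sgnw (u @ x # y # v) (u @ y # x # v) = -1"
proof -
  let ?w = "u @ x # y # v" and ?w' = "u @ y # x # v"
  have r: "rearrangement ?w ?w'"
    using assms by (auto simp: rearrangement_def)
  have "rearr_perm ?w ?w' = Transposition.transpose (length u) (Suc (length u))"
  proof
    fix i
    show "rearr_perm ?w ?w' i = Transposition.transpose (length u) (Suc (length u)) i"
    proof (cases "i < length ?w")
      case True
      show ?thesis
        by (rule rearr_perm_eqI[OF r True])
          (use True in \<open>auto simp: nth_append nth_Cons transpose_def split: nat.split\<close>)
    next
      case False
      then show ?thesis by (auto simp: rearr_perm_outside transpose_def)
    qed
  qed
  with r show ?thesis
    by (simp add: sgnw_rearrangement sign_swap_id)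
qed

lemma sign_shift:
  assumes "p permutes {..<n}"
  shows "sign (\<lambda>i. if i = 0 then 0 else Suc (p (i - 1))) = sign p"
proof -
  have "map_permutation {..<n} Suc p = (\<lambda>i. if i = 0 then 0 else Suc (p (i - 1)))"
  proof
    fix i
    show "map_permutation {..<n} Suc p i = (if i = 0 then 0 else Suc (p (i - 1)))"
    proof (cases "i \<in> Suc ` {..<n}")
      case True
      then obtain j where j: "j < n" "i = Suc j" by auto
      then have "inv_into {..<n} Suc (Suc j) = j"
        by (intro inv_into_f_eq) auto
      with j show ?thesis
        by (simp add: map_permutation_def restrict_id_def)
    next
      case False
      then have "i = 0 \<or> i > n" by (cases i) auto
      with False assms show ?thesis
        by (auto simp: map_permutation_def restrict_id_def permutes_not_in)
    qed
  qed
  with sign_map_permutation[of Suc "{..<n}" p] assms show ?thesis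
    by simp
qed

lemma sgnw_Cons:
  assumes "rearrangement (a # u) (a # v)"
  shows "sgnw (a # u) (a # v) = sgnw u v"
proof -
  have uv: "rearrangement u v"
    using assms by (auto simp: rearrangement_def)
  have "rearr_perm (a # u) (a # v) = (\<lambda>i. if i = 0 then 0 else Suc (rearr_perm u v (i - 1)))"
  proof
    fix i
    show "rearr_perm (a # u) (a # v) i = (if i = 0 then 0 else Suc (rearr_perm u v (i - 1)))"
    proof (cases "i < length (a # u)")
      case True
      show ?thesis
      proof (cases i)
        case 0
        then show ?thesis using rearr_perm_eqI[OF assms True, of 0] by simp
      next
        case (Suc k)
        with True have "rearr_perm u v k < length u \<and> u ! rearr_perm u v k = v ! k"
          by (intro rearr_perm_nth[OF uv]) simp
        with Suc show ?thesis
          using rearr_perm_eqI[OF assms True, of "Suc (rearr_perm u v k)"] by simp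
      qed
    next
      case False
      then show ?thesis by (cases i) (auto simp: rearr_perm_outside)
    qed
  qed
  then show ?thesis
    using assms uv sign_shift[OF rearr_perm_permutes[OF uv]] by (simp add: sgnw_rearrangement)
qed

lemma sgnw_move_front:
  assumes "distinct (u @ c # v)"
  shows "sgnw (u @ c # v) (c # u @ v) = (-1) ^ length u"
  using assms
proof (induction u)
  case Nil
  then show ?case by (simp add: sgnw_refl)
next
  case (Cons a u)
  have "sgnw (a # u @ c # v) (c # a # u @ v) =
      sgnw (a # u @ c # v) (a # c # u @ v) * sgnw (a # c # u @ v) (c # a # u @ v)"
    by (rule sgnw_trans) (use Cons.prems in \<open>auto simp: rearrangement_def\<close>)
  also have "sgnw (a # u @ c # v) (a # c # u @ v) = sgnw (u @ c # v) (c # u @ v)"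
    by (rule sgnw_Cons) (use Cons.prems in \<open>auto simp: rearrangement_def\<close>)
  also have "sgnw (a # c # u @ v) (c # a # u @ v) = -1"
    using sgnw_swap[of "[]" a c "u @ v"] Cons.prems by auto
  finally show ?case
    using Cons by simp
qed

lemma sgnw_pair_front:
  assumes "distinct (u @ c # d # v)"
  shows "sgnw (c # d # u @ v) (u @ c # d # v) = 1"
proof -
  have "sgnw (u @ c # d # v) (c # d # u @ v) =
      sgnw (u @ c # d # v) (c # u @ d # v) * sgnw (c # u @ d # v) (c # d # u @ v)"
    by (rule sgnw_trans) (use assms in \<open>auto simp: rearrangement_def\<close>)
  also have "sgnw (u @ c # d # v) (c # u @ d # v) = (-1) ^ length u"
    using sgnw_move_front[of u c "d # v"] assms by simp
  also have "sgnw (c # u @ d # v) (c # d # u @ v) = sgnw (u @ d # v) (d # u @ v)"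
    by (rule sgnw_Cons) (use assms in \<open>auto simp: rearrangement_def\<close>)
  also have "\<dots> = (-1) ^ length u"
    using sgnw_move_front[of u d v] assms by simp
  finally have "sgnw (u @ c # d # v) (c # d # u @ v) = 1"
    by (simp flip: power_mult_distrib)
  then show ?thesis
    using sgnw_sym[of "u @ c # d # v" "c # d # u @ v"] assms by (auto simp: rearrangement_def)
qed

lemma sgnw_nth_del_nth:
  assumes "distinct w" "i < length w"
  shows "sgnw w (w ! i # del_nth i w) = (-1) ^ i"
proof -
  have w: "w = take i w @ w ! i # drop (Suc i) w"
    by (rule id_take_nth_drop[OF assms(2)])
  have "sgnw (take i w @ w ! i # drop (Suc i) w) (w ! i # take i w @ drop (Suc i) w) = (-1) ^ length (take i w)"
    by (rule sgnw_move_front) (simp only: w[symmetric] assms(1))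
  with assms(2) show ?thesis
    by (simp only: del_nth_def w[symmetric] length_take min_absorb2 less_imp_le)
qed

section \<open>Perfect matchings\<close>

definition pair_set :: "'a \<times> 'a \<Rightarrow> 'a set" where
  "pair_set p = {fst p, snd p}"

lemma pair_set_Pair [simp]: "pair_set (a, b) = {a, b}"
  by (simp add: pair_set_def)

lemma case_prod_doubleton_eq_pair_set: "(\<lambda>(x, y). {x, y}) = pair_set"
  by (auto simp: pair_set_def)

definition pairs_prod :: "('a \<Rightarrow> 'a \<Rightarrow> 'r::comm_ring_1) \<Rightarrow> ('a \<times> 'a) list \<Rightarrow> 'r" where
  "pairs_prod g ps = prod_list (map (\<lambda>(x, y). g x y) ps)"

lemma pairs_prod_Nil [simp]: "pairs_prod g [] = 1"
  by (simp add: pairs_prod_def)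

lemma pairs_prod_Cons [simp]: "pairs_prod g ((a, b) # ps) = g a b * pairs_prod g ps"
  by (simp add: pairs_prod_def)

lemma pairs_prod_append [simp]: "pairs_prod g (ps @ qs) = pairs_prod g ps * pairs_prod g qs"
  by (simp add: pairs_prod_def)

lemma flat_pairs_Nil [simp]: "flat_pairs [] = []"
  by (simp add: flat_pairs_def)

lemma flat_pairs_Cons [simp]: "flat_pairs ((a, b) # ps) = a # b # flat_pairs ps"
  by (simp add: flat_pairs_def)

lemma flat_pairs_append [simp]: "flat_pairs (ps @ qs) = flat_pairs ps @ flat_pairs qs"
  by (simp add: flat_pairs_def)

lemma set_flat_pairs: "set (flat_pairs ps) = \<Union> (pair_set ` set ps)"
proof (induction ps)
  case (Cons p ps)
  then show ?case by (cases p) auto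
qed simp

lemma split_pair_list:
  assumes "k < length qs" "qs ! k = (c, d)"
  obtains u v qs' where "flat_pairs qs = u @ c # d # v" "flat_pairs qs' = u @ v"
    "pairs_prod g qs = g c d * pairs_prod g qs'"
    "mset (map pair_set qs) = add_mset {c, d} (mset (map pair_set qs'))"
proof -
  have qs: "qs = take k qs @ (c, d) # drop (Suc k) qs"
    using assms by (metis id_take_nth_drop)
  let ?qs' = "take k qs @ drop (Suc k) qs"
  have "flat_pairs qs = flat_pairs (take k qs) @ c # d # flat_pairs (drop (Suc k) qs)"
    by (subst qs) simp
  moreover have "pairs_prod g qs = g c d * pairs_prod g ?qs'"
    by (subst qs) (simp add: mult_ac)
  moreover have "mset (map pair_set qs) = add_mset {c, d} (mset (map pair_set ?qs'))"
    by (subst qs) simp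
  moreover have "flat_pairs ?qs' = flat_pairs (take k qs) @ flat_pairs (drop (Suc k) qs)"
    by simp
  ultimately show ?thesis
    using that by blast
qed

context skew_form
begin

lemma sgnw_pair_Cons_Cons:
  assumes "distinct (a # b # w)" "rearrangement w w'" "{c, d} = {a, b}"
  shows "of_int (sgnw (a # b # w) (c # d # w')) * g c d = of_int (sgnw w w') * g a b"
proof (cases "c = a")
  case True
  with assms(3) have "d = b"
    by (metis doubleton_eq_iff)
  moreover have "sgnw (a # b # w) (a # b # w') = sgnw w w'"
    using assms(1,2) by (simp add: sgnw_Cons rearrangement_def)
  ultimately show ?thesis
    using True by simp
next
  case False
  with assms(3) have cd: "c = b" "d = a"
    by (auto simp: doubleton_eq_iff)
  have "sgnw (a # b # w) (b # a # w') = sgnw (a # b # w) (b # a # w) * sgnw (b # a # w) (b # a # w')"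
    by (rule sgnw_trans) (use assms(1,2) in \<open>auto simp: rearrangement_def\<close>)
  also have "sgnw (a # b # w) (b # a # w) = -1"
    using sgnw_swap[of "[]" a b w] assms(1) by simp
  also have "sgnw (b # a # w) (b # a # w') = sgnw (a # w) (a # w')"
    by (rule sgnw_Cons) (use assms(1,2) in \<open>auto simp: rearrangement_def\<close>)
  also have "\<dots> = sgnw w w'"
    by (rule sgnw_Cons) (use assms(1,2) in \<open>auto simp: rearrangement_def\<close>)
  finally show ?thesis
    using cd skew[of b a] by simp
qed

lemma sgnw_pair_to_front:
  assumes "distinct (a # b # w)" "distinct (u @ c # d # v)"
    and "set (a # b # w) = set (u @ c # d # v)" "{c, d} = {a, b}"
  shows "of_int (sgnw (a # b # w) (u @ c # d # v)) * g c d = of_int (sgnw w (u @ v)) * g a b"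
proof -
  have "sgnw (a # b # w) (u @ c # d # v) =
      sgnw (a # b # w) (c # d # u @ v) * sgnw (c # d # u @ v) (u @ c # d # v)"
    by (rule sgnw_trans) (use assms(1-3) in \<open>auto simp: rearrangement_def\<close>)
  also have "sgnw (c # d # u @ v) (u @ c # d # v) = 1"
    by (rule sgnw_pair_front[OF assms(2)])
  finally have "sgnw (a # b # w) (u @ c # d # v) = sgnw (a # b # w) (c # d # u @ v)"
    by simp
  moreover have "rearrangement w (u @ v)"
    using assms by (auto simp: rearrangement_def doubleton_eq_iff)
  ultimately show ?thesis
    using sgnw_pair_Cons_Cons[OF assms(1) _ assms(4)] by simp
qed

text \<open>This is why the summand of \<^const>\<open>matching_sum\<close> does not depend on the chosen listing.\<close>

lemma pairs_prod_relisting: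
  assumes "distinct (flat_pairs ps)" "distinct (flat_pairs qs)"
    and "mset (map pair_set ps) = mset (map pair_set qs)"
  shows "of_int (sgnw (flat_pairs ps) (flat_pairs qs)) * pairs_prod g qs = pairs_prod g ps"
  using assms
proof (induction ps arbitrary: qs)
  case Nil
  then show ?case by (simp add: sgnw_refl)
next
  case (Cons p ps)
  obtain a b where p: "p = (a, b)"
    by (cases p)
  have "{a, b} \<in> set (map pair_set qs)"
    using Cons.prems(3) p by (metis pair_set_Pair list.set_intros(1) list.simps(9) set_mset_mset)
  then obtain k where k: "k < length qs" "pair_set (qs ! k) = {a, b}"
    by (auto simp: in_set_conv_nth)
  obtain c d where cd: "qs ! k = (c, d)"
    by (cases "qs ! k")
  then obtain u v qs' where flat_qs: "flat_pairs qs = u @ c # d # v" and flat_qs': "flat_pairs qs' = u @ v"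
    and prod_qs: "pairs_prod g qs = g c d * pairs_prod g qs'"
    and mset_qs: "mset (map pair_set qs) = add_mset {c, d} (mset (map pair_set qs'))"
    using split_pair_list[OF k(1)] by blast
  have ab: "{c, d} = {a, b}"
    using k cd by simp
  have dist_qs: "distinct (u @ c # d # v)"
    using Cons.prems(2) flat_qs by simp
  have dist_ps: "distinct (a # b # flat_pairs ps)"
    using Cons.prems(1) p by simp
  have "pair_set ` set (p # ps) = pair_set ` set qs"
    using arg_cong[OF Cons.prems(3), of set_mset] by simp
  then have "set (flat_pairs (p # ps)) = set (flat_pairs qs)"
    by (simp only: set_flat_pairs)
  with p flat_qs have same_set: "set (a # b # flat_pairs ps) = set (u @ c # d # v)"
    by simp
  have "of_int (sgnw (flat_pairs (p # ps)) (flat_pairs qs)) * pairs_prod g qs =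
      of_int (sgnw (a # b # flat_pairs ps) (u @ c # d # v)) * g c d * pairs_prod g qs'"
    using p flat_qs prod_qs by (simp add: mult.assoc)
  also have "\<dots> = g a b * (of_int (sgnw (flat_pairs ps) (u @ v)) * pairs_prod g qs')"
    using sgnw_pair_to_front[OF dist_ps dist_qs same_set ab] by (simp add: mult_ac)
  also have "\<dots> = pairs_prod g (p # ps)"
    using Cons.IH[of qs'] Cons.prems(1,3) p flat_qs' dist_qs mset_qs ab by simp
  finally show ?case .
qed

end

lemma perfect_matching_iff:
  "perfect_matching Z M \<longleftrightarrow>
    \<Union>M = Z \<and> (\<forall>a\<in>M. \<forall>b\<in>M. a \<noteq> b \<longrightarrow> a \<inter> b = {}) \<and> (\<forall>e\<in>M. card e = 2)"
  unfolding perfect_matching_def partition_on_def disjoint_def by force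

lemma perfect_matching_finite: "perfect_matching Z M \<Longrightarrow> finite Z \<Longrightarrow> finite M"
  unfolding perfect_matching_def by (blast intro: finite_elements)

lemma finite_perfect_matchings: "finite Z \<Longrightarrow> finite {M. perfect_matching Z M}"
  unfolding perfect_matching_def by (rule finite_subset[OF _ finitely_many_partition_on]) auto

lemma perfect_matching_empty: "perfect_matching {} M \<longleftrightarrow> M = {}"
  by (auto simp: perfect_matching_def partition_on_empty)

lemma perfect_matching_insert_pair:
  assumes "x \<notin> W" "y \<in> W" "perfect_matching (W - {y}) M"
  shows "perfect_matching (insert x W) (insert {x, y} M)"
proof -
  have "\<Union>M = W - {y}"
    using assms(3) by (simp add: perfect_matching_def partition_on_def)
  with assms(1) have "disjnt {x, y} (\<Union>M)"
    by (auto simp: disjnt_def)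
  moreover have "insert x W - {x, y} = W - {y}" and "x \<noteq> y"
    using assms(1,2) by auto
  ultimately show ?thesis
    using assms by (auto simp: perfect_matching_def partition_on_insert)
qed

lemma perfect_matching_insertD:
  assumes "x \<notin> W" "perfect_matching (insert x W) M"
  shows "\<exists>y\<in>W. \<exists>M'. perfect_matching (W - {y}) M' \<and> M = insert {x, y} M'"
proof -
  have part: "partition_on (insert x W) M" and two: "\<forall>e\<in>M. card e = 2"
    using assms(2) by (auto simp: perfect_matching_def)
  obtain e where e: "e \<in> M" "x \<in> e"
    using partition_onD1[OF part] by blast
  with two obtain y where y: "e = {x, y}" "x \<noteq> y"
    by (auto simp: card_2_iff doubleton_eq_iff)
  have "disjnt e (\<Union>(M - {e}))"
    using partition_onD2[OF part] e(1) by (auto simp: disjnt_def disjoint_def)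
  with part e(1) have "partition_on (insert x W - e) (M - {e})" "e \<subseteq> insert x W"
    using partition_on_insert[of e "M - {e}" "insert x W"] by (simp_all add: insert_absorb)
  moreover have "insert x W - e = W - {y}"
    using y assms(1) by auto
  ultimately show ?thesis
    using two y e(1) by (intro bexI[of _ y] exI[of _ "M - {e}"]) (auto simp: perfect_matching_def)
qed

lemma sum_perfect_matchings_insert:
  assumes "x \<notin> W" "finite W"
  shows "(\<Sum>M | perfect_matching (insert x W) M. h M) =
    (\<Sum>y\<in>W. \<Sum>M | perfect_matching (W - {y}) M. h (insert {x, y} M))"
proof -
  let ?P = "\<lambda>y. {M. perfect_matching (W - {y}) M}"
  have eq: "{M. perfect_matching (insert x W) M} = (\<Union>y\<in>W. insert {x, y} ` ?P y)"
    using perfect_matching_insertD[OF assms(1)] perfect_matching_insert_pair[OF assms(1)] by blast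
  have not_in: "{x, y} \<notin> M" if "perfect_matching (W - {y}) M" for y M
    using that assms(1) by (auto simp: perfect_matching_iff)
  have disj: "insert {x, y} ` ?P y \<inter> insert {x, y'} ` ?P y' = {}"
    if "y \<in> W" "y' \<in> W" "y \<noteq> y'" for y y'
  proof -
    have "insert {x, y} M \<noteq> insert {x, y'} M'" if "M' \<in> ?P y'" for M M'
    proof
      assume eq: "insert {x, y} M = insert {x, y'} M'"
      have "{x, y} \<noteq> {x, y'}"
        using \<open>y \<noteq> y'\<close> assms(1) \<open>y \<in> W\<close> by (auto simp: doubleton_eq_iff)
      with eq have "{x, y} \<in> M'"
        by (metis insertE insertI1)
      with that assms(1) show False
        by (auto simp: perfect_matching_iff)
    qed
    then show ?thesis
      by (auto simp: image_iff)
  qed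
  have "(\<Sum>M | perfect_matching (insert x W) M. h M) = (\<Sum>y\<in>W. sum h (insert {x, y} ` ?P y))"
    unfolding eq
  proof (rule sum.UNION_disjoint)
    show "finite W"
      by (rule assms(2))
    show "\<forall>y\<in>W. finite (insert {x, y} ` ?P y)"
      using assms(2) by (simp add: finite_perfect_matchings)
    show "\<forall>y\<in>W. \<forall>y'\<in>W. y \<noteq> y' \<longrightarrow> insert {x, y} ` ?P y \<inter> insert {x, y'} ` ?P y' = {}"
      by (intro ballI impI disj)
  qed
  also have "\<dots> = (\<Sum>y\<in>W. \<Sum>M\<in>?P y. h (insert {x, y} M))"
  proof (rule sum.cong[OF refl])
    fix y
    have "inj_on (insert {x, y}) (?P y)"
      by (rule inj_onI) (use not_in in \<open>auto simp: insert_ident\<close>)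
    then show "sum h (insert {x, y} ` ?P y) = (\<Sum>M\<in>?P y. h (insert {x, y} M))"
      by (simp add: sum.reindex)
  qed
  finally show ?thesis .
qed

lemma listing_of_pair_sets: "listing_of M ps \<Longrightarrow> distinct (map pair_set ps) \<and> set (map pair_set ps) = M"
  unfolding listing_of_def case_prod_doubleton_eq_pair_set by (metis card_distinct length_map)

lemma distinct_flat_pairs:
  assumes "distinct (map pair_set ps)" "\<forall>p\<in>set ps. card (pair_set p) = 2"
    and "\<forall>p\<in>set ps. \<forall>q\<in>set ps. pair_set p \<noteq> pair_set q \<longrightarrow> pair_set p \<inter> pair_set q = {}"
  shows "distinct (flat_pairs ps)"
  using assms
proof (induction ps)
  case Nil
  then show ?case by simp
next
  case (Cons p ps)
  obtain a b where p: "p = (a, b)"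
    by (cases p)
  have "a \<noteq> b"
    using Cons.prems(2) p by (auto simp: card_2_iff doubleton_eq_iff)
  moreover have "z \<notin> set (flat_pairs ps)" if "z \<in> {a, b}" for z
  proof
    assume "z \<in> set (flat_pairs ps)"
    then obtain q where q: "q \<in> set ps" "z \<in> pair_set q"
      by (auto simp: set_flat_pairs)
    with Cons.prems(1) p have "pair_set q \<noteq> {a, b}"
      by auto
    with Cons.prems(3) p q(1) have "pair_set p \<inter> pair_set q = {}"
      by auto
    with q(2) that p show False
      by auto
  qed
  moreover have "distinct (flat_pairs ps)"
    using Cons by auto
  ultimately show ?case
    using p by simp
qed

lemma listing_of_flat_pairs:
  assumes "perfect_matching Z M" "listing_of M ps"
  shows "distinct (flat_pairs ps) \<and> set (flat_pairs ps) = Z"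
proof -
  have blocks: "distinct (map pair_set ps)" "set (map pair_set ps) = M"
    using listing_of_pair_sets[OF assms(2)] by auto
  have "distinct (flat_pairs ps)"
    by (rule distinct_flat_pairs) (use blocks assms(1) in \<open>auto simp: perfect_matching_iff\<close>)
  moreover have "set (flat_pairs ps) = Z"
    using blocks assms(1) by (auto simp: set_flat_pairs perfect_matching_iff)
  ultimately show ?thesis by simp
qed

lemma listing_of_exists:
  assumes "perfect_matching Z M" "finite Z"
  shows "\<exists>ps. listing_of M ps"
proof -
  obtain l where l: "set l = M" "distinct l"
    using finite_distinct_list[OF perfect_matching_finite[OF assms]] by blast
  have "\<forall>e\<in>M. \<exists>p. pair_set p = e"
  proof
    fix e assume "e \<in> M"
    then have "card e = 2"
      using assms(1) by (auto simp: perfect_matching_iff)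
    then obtain x y where "e = {x, y}"
      by (auto simp: card_2_iff)
    then show "\<exists>p. pair_set p = e"
      by (intro exI[of _ "(x, y)"]) simp
  qed
  from bchoice[OF this] obtain pick where pick: "\<forall>e\<in>M. pair_set (pick e) = e"
    by blast
  define ps where "ps = map pick l"
  have blocks: "map pair_set ps = l"
    unfolding ps_def map_map by (rule map_idI) (use pick l in auto)
  then have "distinct ps"
    using l(2) by (metis distinct_map)
  moreover have "length ps = card M"
    using l distinct_card by (metis length_map ps_def)
  moreover have "set (map (\<lambda>(x, y). {x, y}) ps) = M"
    using blocks l by (simp add: case_prod_doubleton_eq_pair_set)
  ultimately show ?thesis
    unfolding listing_of_def by blast
qed

lemma listing_of_insert:
  assumes "listing_of M ps" "finite M" "pair_set p \<notin> M"
  shows "listing_of (insert (pair_set p) M) (p # ps)"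
proof -
  have "p \<notin> set ps"
    using assms(3) listing_of_pair_sets[OF assms(1)] by auto
  with assms show ?thesis
    by (auto simp: listing_of_def case_prod_doubleton_eq_pair_set)
qed

definition matching_term :: "('a \<Rightarrow> 'a \<Rightarrow> 'r::comm_ring_1) \<Rightarrow> 'a list \<Rightarrow> 'a set set \<Rightarrow> 'r" where
  "matching_term g u M =
    (let ps = (SOME ps. listing_of M ps) in of_int (sgnw u (flat_pairs ps)) * pairs_prod g ps)"

lemma matching_sum_conv_matching_term:
  "matching_sum g u = (\<Sum>M | perfect_matching (set u) M. matching_term g u M)"
  by (simp add: matching_sum_def matching_term_def pairs_prod_def)

lemma matching_sum_Nil:
  fixes g :: "'a \<Rightarrow> 'a \<Rightarrow> 'r::comm_ring_1"
  shows "matching_sum g [] = 1"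
proof -
  have "{M. perfect_matching (set ([] :: 'a list)) M} = {{}}"
    by (auto simp: perfect_matching_empty)
  then have "matching_sum g [] = matching_term g [] {}"
    unfolding matching_sum_conv_matching_term by simp
  moreover have "(SOME ps. listing_of {} ps) = ([] :: ('a \<times> 'a) list)"
    by (rule some_equality) (auto simp: listing_of_def)
  ultimately show ?thesis
    by (simp add: matching_term_def sgnw_refl)
qed

context skew_form
begin

lemma matching_term_eq:
  assumes "distinct u" "perfect_matching (set u) M" "listing_of M ps"
  shows "matching_term g u M = of_int (sgnw u (flat_pairs ps)) * pairs_prod g ps"
proof -
  define ps0 where "ps0 = (SOME ps. listing_of M ps)"
  have l0: "listing_of M ps0"
    unfolding ps0_def using assms(3) by (rule someI)
  have flat: "distinct (flat_pairs ps) \<and> set (flat_pairs ps) = set u"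
    and flat0: "distinct (flat_pairs ps0) \<and> set (flat_pairs ps0) = set u"
    using listing_of_flat_pairs assms(2,3) l0 by blast+
  have "mset (map pair_set ps) = mset (map pair_set ps0)"
    using listing_of_pair_sets[OF assms(3)] listing_of_pair_sets[OF l0]
    by (metis set_eq_iff_mset_eq_distinct)
  then have relist: "of_int (sgnw (flat_pairs ps) (flat_pairs ps0)) * pairs_prod g ps0 = pairs_prod g ps"
    using flat flat0 by (intro pairs_prod_relisting) auto
  have "sgnw u (flat_pairs ps0) = sgnw u (flat_pairs ps) * sgnw (flat_pairs ps) (flat_pairs ps0)"
    by (rule sgnw_trans) (use assms(1) flat flat0 in \<open>auto simp: rearrangement_def\<close>)
  then have "matching_term g u M =
      of_int (sgnw u (flat_pairs ps)) * (of_int (sgnw (flat_pairs ps) (flat_pairs ps0)) * pairs_prod g ps0)"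
    by (simp add: matching_term_def ps0_def[symmetric] mult.assoc)
  with relist show ?thesis
    by simp
qed

lemma matching_term_insert:
  assumes dist: "distinct (x # w)" and i: "i < length w"
    and pm: "perfect_matching (set (del_nth i w)) M"
  shows "matching_term g (x # w) (insert {x, w ! i} M) = (-1) ^ i * g x (w ! i) * matching_term g (del_nth i w) M"
proof -
  have dw: "distinct w" and xw: "x \<notin> set w"
    using dist by auto
  have set_del: "set (del_nth i w) = set w - {w ! i}"
    by (rule set_del_nth[OF dw i])
  obtain ps where l: "listing_of M ps"
    using listing_of_exists[OF pm] by auto
  have flat: "distinct (flat_pairs ps)" "set (flat_pairs ps) = set w - {w ! i}"
    using listing_of_flat_pairs[OF pm l] set_del by auto
  have "{x, w ! i} \<notin> M"
  proof
    assume "{x, w ! i} \<in> M"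
    then have "x \<in> \<Union>M"
      by blast
    with pm set_del_nth_subset[of i w] xw show False
      by (auto simp: perfect_matching_def partition_on_def)
  qed
  then have l': "listing_of (insert {x, w ! i} M) ((x, w ! i) # ps)"
    using listing_of_insert[OF l perfect_matching_finite[OF pm], of "(x, w ! i)"] by simp
  have pm': "perfect_matching (set (x # w)) (insert {x, w ! i} M)"
    using perfect_matching_insert_pair[of x "set w" "w ! i" M] pm xw i set_del by simp
  have wi: "w ! i \<in> set w"
    using i by simp
  have r1: "rearrangement (x # w) (x # w ! i # flat_pairs ps)"
    using dist wi flat by (auto simp: rearrangement_def)
  have r2: "rearrangement w (w ! i # del_nth i w)"
    using dw wi set_del distinct_del_nth[OF dw, of i] by (auto simp: rearrangement_def)
  have r3: "rearrangement (w ! i # del_nth i w) (w ! i # flat_pairs ps)"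
    using flat set_del distinct_del_nth[OF dw, of i] by (auto simp: rearrangement_def)
  have "sgnw (x # w) (x # w ! i # flat_pairs ps) = sgnw w (w ! i # flat_pairs ps)"
    by (rule sgnw_Cons[OF r1])
  also have "\<dots> = sgnw w (w ! i # del_nth i w) * sgnw (w ! i # del_nth i w) (w ! i # flat_pairs ps)"
    by (rule sgnw_trans[OF r2]) (use r3 in \<open>simp add: rearrangement_def\<close>)
  also have "\<dots> = (-1) ^ i * sgnw (del_nth i w) (flat_pairs ps)"
    using sgnw_nth_del_nth[OF dw i] sgnw_Cons[OF r3] by simp
  finally show ?thesis
    using matching_term_eq[OF dist pm' l'] matching_term_eq[OF distinct_del_nth[OF dw] pm l]
    by (simp add: mult_ac)
qed

lemma matching_sum_Cons:
  assumes "distinct (x # w)"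
  shows "matching_sum g (x # w) = (\<Sum>i<length w. (-1) ^ i * g x (w ! i) * matching_sum g (del_nth i w))"
proof -
  have dw: "distinct w" and xw: "x \<notin> set w"
    using assms by auto
  let ?s = "\<lambda>y. \<Sum>M | perfect_matching (set w - {y}) M. matching_term g (x # w) (insert {x, y} M)"
  have "matching_sum g (x # w) = (\<Sum>y\<in>set w. ?s y)"
    unfolding matching_sum_conv_matching_term using sum_perfect_matchings_insert[OF xw] by simp
  also have "\<dots> = (\<Sum>i<length w. ?s (w ! i))"
    using sum.reindex_bij_betw[OF bij_betw_nth[OF dw refl refl], of ?s] by simp
  also have "\<dots> = (\<Sum>i<length w. (-1) ^ i * g x (w ! i) * matching_sum g (del_nth i w))"
  proof (rule sum.cong[OF refl])
    fix i assume "i \<in> {..<length w}"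
    then have i: "i < length w" by simp
    show "?s (w ! i) = (-1) ^ i * g x (w ! i) * matching_sum g (del_nth i w)"
      unfolding set_del_nth[OF dw i, symmetric] matching_sum_conv_matching_term sum_distrib_left
      by (rule sum.cong[OF refl]) (use matching_term_insert[OF assms i] in auto)
  qed
  finally show ?thesis .
qed

lemma matching_sum_eq_pfaff: "distinct u \<Longrightarrow> matching_sum g u = pfaff g u"
proof (induction "length u" arbitrary: u rule: less_induct)
  case less
  show ?case
  proof (cases u)
    case Nil
    then show ?thesis by (simp add: matching_sum_Nil)
  next
    case (Cons x w)
    have "matching_sum g (del_nth i w) = pfaff g (del_nth i w)" if "i < length w" for i
      using less Cons that distinct_del_nth[of w i] by (intro less(1)) auto
    with less(2) Cons show ?thesis
      by (simp add: matching_sum_Cons)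
  qed
qed

end

lemma (in alternating_form) pf_eq_pfaff: "pf g w = pfaff g w"
proof (cases "distinct w")
  case True
  then show ?thesis
    by (cases "w = []") (simp_all add: pf_def pfaff_odd matching_sum_eq_pfaff)
next
  case False
  then have "w \<noteq> []"
    by auto
  with False show ?thesis
    by (simp add: pf_def pfaff_not_distinct)
qed

theorem mainTheorem3:
  fixes f :: "'a \<Rightarrow> 'a \<Rightarrow> 'r::comm_ring_1"
    and \<alpha> \<beta> :: "'a list" and n :: nat
  assumes antisym: "\<And>x y. f x y = - f y x"
    and diag: "\<And>x. f x x = 0"
    and dist: "distinct (\<alpha> @ \<beta>)"
    and ev: "even (length \<alpha>)"
    and len: "length \<beta> = 2 * n"
    and n1: "n \<ge> 1"
  shows "pf f \<alpha> ^ (n - 1) * pf f (\<alpha> @ \<beta>) = matching_sum (\<lambda>x y. pf f (\<alpha> @ [x, y])) \<beta>"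
proof -
  interpret alternating_form f
    by unfold_locales (fact antisym diag)+
  interpret minors: skew_form "\<lambda>x y. pfaff f (\<alpha> @ [x, y])"
    by unfold_locales (rule pfaff_swap)
  have "pf f = pfaff f"
    by (rule ext) (rule pf_eq_pfaff)
  moreover have "matching_sum (\<lambda>x y. pfaff f (\<alpha> @ [x, y])) \<beta> = pfaff (\<lambda>x y. pfaff f (\<alpha> @ [x, y])) \<beta>"
    using dist by (intro minors.matching_sum_eq_pfaff) simp
  ultimately show ?thesis
    using pfaff_power_mul_pfaff_append[OF dist ev len n1] by simp
qed

end
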